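(* Let $G$ be a finite Abelian group (written additively), and let $S(G)=\{x=(x_g)_{g\in G}\in\mathbb{R}^G:\ x_g\ge 0\ \forall g,\ \sum_{g\in G}x_g=1\}$ be the simplex of probability measures on $G$. Define the quadratic stochastic operator $V:S(G)\to S(G)$ by $$(Vx)_h=\sum_{f,g\in G,\ f+g=h}x_f x_g\qquad (h\in G).$$ Let $\nu\in S(G)$ be the Haar measure (uniform distribution) on $G$, i.e. $\nu_g=1/|G|$ for all $g\in G$, which is the centre of the simplex $S(G)$. Then almost all orbits of $V$ tend to the centre of the simplex: for Lebesgue-almost every $x\in S(G)$ (with respect to Lebesgue measure on the $(|G|-1)$-dimensional simplex), $\lim_{k\to\infty}V^k x=\nu$.
   Context: $V^k$ denotes the $k$-th iterate of $V$, with $V^0x=x$ and $V^{k+1}x=V(V^kx)$. *)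

theory Defs
  imports "HOL-Analysis.Analysis" "HOL-Probability.Probability"
begin

definition prob_simplex :: "('g::finite \<Rightarrow> real) set" where
  "prob_simplex = {x. (\<forall>g. 0 \<le> x g) \<and> (\<Sum>g\<in>UNIV. x g) = 1}"

definition qso :: "('g::{ab_group_add,finite} \<Rightarrow> real) \<Rightarrow> ('g \<Rightarrow> real)" where
  "qso x = (\<lambda>h. \<Sum>(f, g)\<in>{(f, g). f + g = h}. x f * x g)"

definition haar :: "'g::finite \<Rightarrow> real" where
  "haar = (\<lambda>g. 1 / real CARD('g))"

text \<open>Standard affine chart of the simplex: drop the coordinate g0.
  Lebesgue measure on the (|G|-1)-dimensional simplex is (up to a constant factor)
  the push-forward of Lebesgue measure on R^(G-{g0}) restricted to this corner.\<close>
definition chart_dom :: "'g::finite \<Rightarrow> ('g \<Rightarrow> real) set" where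
  "chart_dom g0 = {y. (\<forall>g. g \<noteq> g0 \<longrightarrow> 0 \<le> y g) \<and> (\<Sum>g\<in>UNIV - {g0}. y g) \<le> 1}"

definition chart_lift :: "'g::finite \<Rightarrow> ('g \<Rightarrow> real) \<Rightarrow> ('g \<Rightarrow> real)" where
  "chart_lift g0 y = (\<lambda>g. if g = g0 then 1 - (\<Sum>g'\<in>UNIV - {g0}. y g') else y g)"

end

theory Submission
  imports Defs
begin

text \<open>If a probability vector \<open>z\<close> has all coordinates \<open>\<ge> \<delta>\<close>, then \<open>V z - \<nu> = (z - \<nu>) * (z - \<delta>)\<close>,
  because \<open>z - \<nu>\<close> has mass zero; as \<open>z - \<delta>\<close> is nonnegative of mass \<open>1 - |G| \<delta>\<close>, \<open>V\<close>
  contracts the \<open>\<ell>\<^sup>1\<close>-distance to \<open>\<nu>\<close> by the factor \<open>1 - |G| \<delta>\<close>. Since \<open>V\<close> preserves the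
  lower bound \<open>\<delta>\<close>, orbits of strictly positive points converge geometrically to \<open>\<nu>\<close>.
  Off a null set no chart coordinate equals \<open>0\<close> or \<open>1\<close>, and then \<open>V x\<close> is strictly positive:
  \<open>x\<close> vanishes at most at \<open>g\<^sub>0\<close>, and if it does, \<open>|G| \<ge> 3\<close>, so every \<open>h\<close> splits as
  \<open>f + (h - f)\<close> with both summands different from \<open>g\<^sub>0\<close>.\<close>

lemma tendsto_fun_componentwise:
  fixes f :: "'a \<Rightarrow> 'b \<Rightarrow> 'c::topological_space"
  assumes "\<And>i. ((\<lambda>k. f k i) \<longlongrightarrow> l i) F"
  shows "(f \<longlongrightarrow> l) F"
  using limitin_componentwise[of "\<lambda>_. euclidean" UNIV f l F] assms
  by (simp add: euclidean_product_topology)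

lemma sum_translate_left:
  fixes y :: "'g::{ab_group_add,finite} \<Rightarrow> 'a::comm_monoid_add"
  shows "(\<Sum>f\<in>UNIV. y (h - f)) = sum y UNIV"
  by (rule sum.reindex_bij_witness[where i="\<lambda>f. h - f" and j="\<lambda>f. h - f"]) auto

lemma sum_translate_right:
  fixes y :: "'g::{ab_group_add,finite} \<Rightarrow> 'a::comm_monoid_add"
  shows "(\<Sum>h\<in>UNIV. y (h - f)) = sum y UNIV"
  by (rule sum.reindex_bij_witness[where i="\<lambda>h. h + f" and j="\<lambda>h. h - f"]) auto

lemma qso_eq_convolution: "qso x h = (\<Sum>f\<in>UNIV. x f * x (h - f))"
proof -
  have pairs: "{(f, g). f + g = h} = (\<lambda>f. (f, h - f)) ` UNIV"
    by (auto simp: image_iff algebra_simps)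
  have "inj (\<lambda>f. (f, h - f))"
    by (auto simp: inj_on_def)
  then show ?thesis
    unfolding qso_def pairs by (simp add: sum.reindex)
qed

lemma sum_qso:
  fixes x :: "'g::{ab_group_add,finite} \<Rightarrow> real"
  shows "sum (qso x) UNIV = (sum x UNIV)\<^sup>2"
proof -
  have "sum (qso x) UNIV = (\<Sum>f\<in>UNIV. \<Sum>h\<in>UNIV. x f * x (h - f))"
    unfolding qso_eq_convolution by (rule sum.swap)
  also have "\<dots> = (\<Sum>f\<in>UNIV. x f * sum x UNIV)"
    by (simp add: sum_distrib_left[symmetric] sum_translate_right)
  finally show ?thesis
    by (simp add: sum_distrib_right[symmetric] power2_eq_square)
qed

lemma qso_ge:
  fixes x :: "'g::{ab_group_add,finite} \<Rightarrow> real"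
  assumes "x \<in> prob_simplex" and "\<And>g. \<delta> \<le> x g"
  shows "\<delta> \<le> qso x h"
proof -
  have "\<delta> = (\<Sum>f\<in>UNIV. x f * \<delta>)"
    using assms(1) by (simp add: prob_simplex_def sum_distrib_right[symmetric])
  also have "\<dots> \<le> (\<Sum>f\<in>UNIV. x f * x (h - f))"
    using assms by (intro sum_mono mult_left_mono) (auto simp: prob_simplex_def)
  finally show ?thesis
    by (simp add: qso_eq_convolution)
qed

lemma qso_prob_simplex:
  fixes x :: "'g::{ab_group_add,finite} \<Rightarrow> real"
  assumes "x \<in> prob_simplex"
  shows "qso x \<in> prob_simplex"
  using assms qso_ge[OF assms, of 0] sum_qso[of x] by (auto simp: prob_simplex_def)

definition haar_dist :: "('g::finite \<Rightarrow> real) \<Rightarrow> real" where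
  "haar_dist z = (\<Sum>g\<in>UNIV. \<bar>z g - haar g\<bar>)"

lemma haar_dist_qso_le:
  fixes z :: "'g::{ab_group_add,finite} \<Rightarrow> real" and \<delta> :: real
  assumes mass: "sum z UNIV = 1" and lower: "\<And>g. \<delta> \<le> z g"
  shows "haar_dist (qso z) \<le> (1 - CARD('g) * \<delta>) * haar_dist z"
proof -
  define n where "n = real CARD('g)"
  have haar: "haar g = 1 / n" for g :: 'g
    by (simp add: haar_def n_def)
  have mass_haar: "(\<Sum>f::'g\<in>UNIV. 1 / n) = 1"
    by (simp add: n_def)
  have factor: "qso z h - 1 / n = (\<Sum>f\<in>UNIV. (z f - 1 / n) * (z (h - f) - \<delta>))" for h
  proof -
    have "(\<Sum>f\<in>UNIV. (z f - 1 / n) * (z (h - f) - \<delta>))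
        = qso z h - (1 / n) * (\<Sum>f\<in>UNIV. z (h - f)) - \<delta> * sum z UNIV + \<delta> * (\<Sum>f::'g\<in>UNIV. 1 / n)"
      by (simp add: qso_eq_convolution algebra_simps sum.distrib sum_subtractf sum_distrib_left)
    then show ?thesis
      by (simp add: sum_translate_left mass mass_haar n_def)
  qed
  have "haar_dist (qso z) \<le> (\<Sum>h\<in>UNIV. \<Sum>f\<in>UNIV. \<bar>z f - 1 / n\<bar> * (z (h - f) - \<delta>))"
    unfolding haar_dist_def haar factor
    by (intro sum_mono order_trans[OF sum_abs] sum.cong[THEN eq_refl])
      (simp_all add: abs_mult lower)
  also have "\<dots> = (\<Sum>f\<in>UNIV. \<bar>z f - 1 / n\<bar> * (\<Sum>h\<in>UNIV. z (h - f) - \<delta>))"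
    by (subst sum.swap) (simp add: sum_distrib_left)
  also have "\<dots> = (1 - n * \<delta>) * haar_dist z"
    by (simp add: sum_subtractf sum_translate_right mass haar_dist_def haar
        sum_distrib_left mult.commute n_def)
  finally show ?thesis
    by (simp add: n_def)
qed

lemma qso_iterates_tendsto_haar:
  fixes x :: "'g::{ab_group_add,finite} \<Rightarrow> real"
  assumes simplex: "x \<in> prob_simplex" and pos: "\<And>g. 0 < x g"
  shows "(\<lambda>k. (qso ^^ k) x) \<longlonglongrightarrow> haar"
proof -
  define \<delta> where "\<delta> = Min (range x)"
  define c where "c = 1 - real CARD('g) * \<delta>"
  have "0 < \<delta>"
    unfolding \<delta>_def using pos by (subst Min_gr_iff) auto
  have lower: "\<delta> \<le> x g" for g
    unfolding \<delta>_def by simp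
  have iterate: "(qso ^^ k) x \<in> prob_simplex \<and> (\<forall>g. \<delta> \<le> (qso ^^ k) x g)" for k
  proof (induction k)
    case (Suc k)
    then show ?case
      using qso_prob_simplex[of "(qso ^^ k) x"] qso_ge[of "(qso ^^ k) x" \<delta>] by simp
  qed (simp add: simplex lower)
  have "real CARD('g) * \<delta> = (\<Sum>g::'g\<in>UNIV. \<delta>)"
    by simp
  also have "\<dots> \<le> 1"
    using simplex lower sum_mono[of UNIV "\<lambda>_. \<delta>" x] by (simp add: prob_simplex_def)
  finally have "0 \<le> c" "c < 1"
    using \<open>0 < \<delta>\<close> by (simp_all add: c_def)
  have dist: "haar_dist ((qso ^^ k) x) \<le> c ^ k * haar_dist x" for k
  proof (induction k)
    case (Suc k)
    have "haar_dist ((qso ^^ Suc k) x) \<le> c * haar_dist ((qso ^^ k) x)"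
      using iterate[of k] haar_dist_qso_le[of "(qso ^^ k) x" \<delta>]
      by (simp add: c_def prob_simplex_def)
    also have "\<dots> \<le> c * (c ^ k * haar_dist x)"
      using Suc \<open>0 \<le> c\<close> by (rule mult_left_mono)
    finally show ?case
      by (simp add: mult.assoc)
  qed simp
  have geometric: "(\<lambda>k. c ^ k * haar_dist x) \<longlonglongrightarrow> 0"
    using \<open>0 \<le> c\<close> \<open>c < 1\<close> by (intro tendsto_mult_left_zero LIMSEQ_power_zero) auto
  have bound: "norm ((qso ^^ k) x g - haar g) \<le> c ^ k * haar_dist x" for k g
  proof -
    have "\<bar>(qso ^^ k) x g - haar g\<bar> \<le> haar_dist ((qso ^^ k) x)"
      unfolding haar_dist_def by (rule member_le_sum) auto
    then show ?thesis
      using dist[of k] by simp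
  qed
  have "(\<lambda>k. (qso ^^ k) x g - haar g) \<longlonglongrightarrow> 0" for g
    using bound by (intro Lim_null_comparison[OF always_eventually geometric] allI)
  then show ?thesis
    by (intro tendsto_fun_componentwise) (simp add: LIM_zero_iff)
qed

lemma chart_lift_prob_simplex:
  assumes "y \<in> chart_dom g0"
  shows "chart_lift g0 y \<in> prob_simplex"
proof -
  have "sum (chart_lift g0 y) UNIV = chart_lift g0 y g0 + (\<Sum>g\<in>UNIV - {g0}. y g)"
    by (simp add: sum.remove[of UNIV g0] chart_lift_def)
  then have "sum (chart_lift g0 y) UNIV = 1"
    by (simp add: chart_lift_def)
  moreover have "0 \<le> chart_lift g0 y g" for g
    using assms by (simp add: chart_lift_def chart_dom_def)
  ultimately show ?thesis
    by (simp add: prob_simplex_def)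
qed

lemma qso_pos_if_summands_pos:
  fixes x :: "'g::{ab_group_add,finite} \<Rightarrow> real"
  assumes "\<And>g. 0 \<le> x g" and "0 < x f" and "0 < x (h - f)"
  shows "0 < qso x h"
proof -
  have "0 < x f * x (h - f)"
    using assms by simp
  also have "\<dots> \<le> (\<Sum>f\<in>UNIV. x f * x (h - f))"
    by (rule member_le_sum[where f="\<lambda>f. x f * x (h - f)"]) (use assms(1) in auto)
  finally show ?thesis
    by (simp add: qso_eq_convolution)
qed

lemma qso_chart_lift_pos:
  fixes g0 :: "'g::{ab_group_add,finite}"
  assumes dom: "y \<in> chart_dom g0" and generic: "\<And>g. g \<noteq> g0 \<Longrightarrow> y g \<noteq> 0 \<and> y g \<noteq> 1"
  shows "0 < qso (chart_lift g0 y) h"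
proof -
  let ?x = "chart_lift g0 y"
  have nonneg: "0 \<le> ?x g" for g
    using chart_lift_prob_simplex[OF dom] by (simp add: prob_simplex_def)
  have pos: "0 < ?x g" if "g \<noteq> g0" for g
    using dom generic[OF that] that by (force simp: chart_lift_def chart_dom_def order_le_less)
  show ?thesis
  proof (cases "0 < ?x g0")
    case True
    with pos have "0 < ?x g" for g
      by (cases "g = g0") auto
    then show ?thesis
      using qso_pos_if_summands_pos[of ?x 0 h] nonneg by simp
  next
    case False
    then have mass: "(\<Sum>g\<in>UNIV - {g0}. y g) = 1"
      using nonneg[of g0] by (simp add: chart_lift_def)
    have "\<not> UNIV - {g0} \<subseteq> {h - g0}"
    proof
      assume "UNIV - {g0} \<subseteq> {h - g0}"
      moreover have "UNIV - {g0} \<noteq> {}"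
        using mass by (metis sum.empty zero_neq_one)
      ultimately have "UNIV - {g0} = {h - g0}"
        by (metis subset_singleton_iff)
      then have "h - g0 \<noteq> g0" and "y (h - g0) = 1"
        using mass by (blast, simp)
      then show False
        using generic by blast
    qed
    then obtain f where "f \<noteq> g0" "f \<noteq> h - g0"
      by blast
    then have "f \<noteq> g0" "h - f \<noteq> g0"
      by (auto simp: algebra_simps)
    then show ?thesis
      using qso_pos_if_summands_pos[of ?x f h] nonneg pos by simp
  qed
qed

lemma AE_PiM_lborel_coordinate_neq:
  assumes "finite I" and "i \<in> I"
  shows "AE y in (\<Pi>\<^sub>M j\<in>I. lborel). y i \<noteq> (c::real)"
proof -
  interpret product_sigma_finite "\<lambda>_. lborel :: real measure"
    by unfold_locales
  let ?N = "\<Pi>\<^sub>E j\<in>I. if j = i then {c} else UNIV"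
  have "emeasure (\<Pi>\<^sub>M j\<in>I. lborel) ?N = (\<Prod>j\<in>I. emeasure lborel (if j = i then {c} else UNIV))"
    using assms by (intro emeasure_PiM) auto
  also have "\<dots> = 0"
    using assms by (intro prod_zero) auto
  finally have "?N \<in> null_sets (\<Pi>\<^sub>M j\<in>I. lborel)"
    using assms by (auto intro: sets_PiM_I_finite)
  then show ?thesis
    by (rule AE_I') (auto simp: space_PiM PiE_iff extensional_def)
qed

theorem theorem2:
  fixes g0 :: "'g::{ab_group_add,finite}"
  shows "AE y in (\<Pi>\<^sub>M g\<in>UNIV - {g0}. lborel).
           y \<in> chart_dom g0 \<longrightarrow>
           (\<lambda>k. (qso ^^ k) (chart_lift g0 y)) \<longlonglongrightarrow> (haar :: 'g \<Rightarrow> real)"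
proof -
  have "AE y in (\<Pi>\<^sub>M g\<in>UNIV - {g0}. lborel). \<forall>g\<in>UNIV - {g0}. y g \<noteq> 0 \<and> y g \<noteq> (1::real)"
    by (intro AE_finite_allI AE_conjI AE_PiM_lborel_coordinate_neq) auto
  then show ?thesis
  proof (rule AE_mp, intro AE_I2 impI)
    fix y :: "'g \<Rightarrow> real"
    assume generic: "\<forall>g\<in>UNIV - {g0}. y g \<noteq> 0 \<and> y g \<noteq> 1" and dom: "y \<in> chart_dom g0"
    have "(\<lambda>k. (qso ^^ k) (qso (chart_lift g0 y))) \<longlonglongrightarrow> haar"
      using generic dom
      by (intro qso_iterates_tendsto_haar qso_prob_simplex chart_lift_prob_simplex
          qso_chart_lift_pos) auto
    then have "(\<lambda>k. (qso ^^ Suc k) (chart_lift g0 y)) \<longlonglongrightarrow> haar"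
      by (simp add: funpow_Suc_right del: funpow.simps)
    then show "(\<lambda>k. (qso ^^ k) (chart_lift g0 y)) \<longlonglongrightarrow> haar"
      by (rule LIMSEQ_imp_Suc)
  qed
qed

end
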